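(* For non-negative integers $n$ let $$S_n=\sum_{k=0}^{n-3}(-1)^k\binom{2k}{k}\binom{n-3}{k}\binom{k}{n-k-3}$$ (so $S_0=S_1=S_2=0$, the sum being empty). Then for every non-negative integer $n$, $$S_{3n}\equiv S_{3n+1}\equiv -S_{3n+2}\pmod 3,\qquad S_{4n+2}\equiv 0\pmod 4,$$ and for every positive integer $n$, $$S_{n+2}+12S_{n+1}+16S_n\equiv 0\pmod n.$$
   Context: Binomial coefficients $\binom{a}{b}$ are zero when $b<0$ or $b>a$. *)

theory Defs
  imports Main "HOL-Number_Theory.Cong"
begin

text \<open>S n = sum over k = 0..n-3 of (-1)^k C(2k,k) C(n-3,k) C(k,n-k-3); empty for n < 3.
  The index set {..< n-2} (nat subtraction) is exactly {0..n-3} when n \<ge> 3 and empty otherwise.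
  Within the range, n-k-3 \<ge> 0, so nat subtraction is exact there.\<close>
definition S :: "nat \<Rightarrow> int" where
  "S n = (\<Sum>k<n-2. (-1)^k * int ((2*k) choose k) * int ((n-3) choose k) * int (k choose (n-3-k)))"

end

theory Submission
  imports Defs "HOL-Computational_Algebra.Polynomial"
begin

text \<open>Let a(k) = (-1)^k C(2k,k) and let L be the linear functional on Z[w] with L(w^k) = a(k).
  Expanding G = 1 + w x (1 + x) by the binomial theorem shows S(m+3) = L([x^m] G^m), and the
  recurrence (k+1) a(k+1) = -(4k+2) a(k) says that L annihilates (w+2) q + w(w+4) q'.

  Modulo 3, G^3 = G(w^3, x^3) and a(3k) = a(3k+1) = a(k), a(3k+2) = 0; extracting coefficients gives
  S(3n) = S(3n+1) = S(n) and S(3n+2) = 2 S(n). Modulo 4 every summand of S(4n+2) vanishes: for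
  m = 4n - 1 odd and j = m - k, C(m,k) C(k,j) = C(m,2j) C(2j,j), so two even central binomial
  coefficients occur, unless k = m, where 4 divides C(2m,m). Finally an explicit creative-telescoping
  certificate gives x G^(m+2) + 12 x^2 G^(m+1) + 16 x^3 G^m = x d/dx A + (w+2) F + w(w+4) d/dw F + (m+3) R;
  applying L to the coefficient of x^(m+3) kills the middle terms and leaves a multiple of m + 3.\<close>

section \<open>The moment functional of the alternating central binomial coefficients\<close>

definition alt_cbinom :: "nat \<Rightarrow> int" where
  "alt_cbinom k = (-1)^k * int ((2*k) choose k)"

lemma Suc_times_central_binomial:
  "Suc k * ((2 * Suc k) choose Suc k) = 2 * (2*k+1) * ((2*k) choose k)"
proof -
  have "Suc k * ((2 * Suc k) choose Suc k) = Suc (Suc (2*k)) * (Suc (2*k) choose k)"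
    using Suc_times_binomial[of k "Suc (2*k)"] by simp
  also have "Suc (2*k) choose k = Suc (2*k) choose Suc k"
    using binomial_symmetric[of "Suc k" "Suc (2*k)"] by simp
  also have "Suc (Suc (2*k)) * (Suc (2*k) choose Suc k) = 2 * (Suc (2*k) * ((2*k) choose k))"
    using Suc_times_binomial_eq[of "2*k" k] by (simp add: mult.commute)
  finally show ?thesis by simp
qed

lemma alt_cbinom_Suc: "int (Suc k) * alt_cbinom (Suc k) = - (4 * int k + 2) * alt_cbinom k"
proof -
  define C where "C = (2 * Suc k) choose Suc k"
  have "int (Suc k) * int C = (4 * int k + 2) * int ((2*k) choose k)"
    using arg_cong[OF Suc_times_central_binomial[of k], of int]
    unfolding C_def[symmetric] by (simp only: of_nat_mult) (simp add: algebra_simps)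
  then have "(-1)^k * (int (Suc k) * int C) = (-1)^k * ((4 * int k + 2) * int ((2*k) choose k))"
    by simp
  then show ?thesis
    unfolding alt_cbinom_def C_def[symmetric] by (simp add: algebra_simps)
qed

definition moment :: "int poly \<Rightarrow> int" where
  "moment p = (\<Sum>k\<le>degree p. coeff p k * alt_cbinom k)"

lemma moment_eq_sum: "degree p \<le> N \<Longrightarrow> moment p = (\<Sum>k\<le>N. coeff p k * alt_cbinom k)"
  unfolding moment_def by (rule sum.mono_neutral_left) (auto simp: coeff_eq_0)

lemma moment_add: "moment (p + q) = moment p + moment q"
proof -
  define N where "N = max (degree p) (degree q)"
  have "degree (p + q) \<le> N"
    unfolding N_def by (rule degree_add_le) auto
  then show ?thesis
    using moment_eq_sum[of p N] moment_eq_sum[of q N] moment_eq_sum[of "p + q" N]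
    by (simp add: N_def sum.distrib algebra_simps)
qed

lemma moment_smult: "moment (smult c p) = c * moment p"
  using moment_eq_sum[of "smult c p" "degree p"] degree_smult_le[of c p]
  by (simp add: moment_def sum_distrib_left algebra_simps)

lemma moment_sum: "moment (\<Sum>i\<in>A. f i) = (\<Sum>i\<in>A. moment (f i))"
  by (induction A rule: infinite_finite_induct) (auto simp: moment_add moment_def[of 0])

lemma moment_monom: "moment (monom c k) = c * alt_cbinom k"
proof -
  have "moment (monom c k) = (\<Sum>i\<le>k. coeff (monom c k) i * alt_cbinom i)"
    by (rule moment_eq_sum) (rule degree_monom_le)
  also have "\<dots> = (\<Sum>i\<le>k. if i = k then c * alt_cbinom k else 0)"
    by (rule sum.cong) (auto simp: coeff_monom)
  finally show ?thesis by simp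
qed

definition moment_annihilator :: "int poly \<Rightarrow> int poly" where
  "moment_annihilator q = [:2,1:] * q + [:0,4,1:] * pderiv q"

lemma moment_annihilator_add:
  "moment_annihilator (p + q) = moment_annihilator p + moment_annihilator q"
  unfolding moment_annihilator_def pderiv_add by algebra

lemma moment_annihilator_sum:
  "moment_annihilator (\<Sum>i\<in>A. f i) = (\<Sum>i\<in>A. moment_annihilator (f i))"
  by (induction A rule: infinite_finite_induct)
     (auto simp: moment_annihilator_add moment_annihilator_def[of 0])

lemma moment_annihilator_monom:
  "moment_annihilator (monom c k) = monom (c * int (Suc k)) (Suc k) + monom (c * (4 * int k + 2)) k"
proof (cases k)
  case 0
  then show ?thesis
    by (simp add: moment_annihilator_def pderiv_monom monom_0 monom_Suc algebra_simps)
next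
  case (Suc j)
  have "[:2,1:] * monom c k = monom (2*c) k + monom c (Suc k)"
    by (simp add: monom_Suc smult_monom)
  moreover have "pderiv (monom c k) = monom (int k * c) j"
    using Suc by (simp add: pderiv_monom)
  then have "[:0,4,1:] * pderiv (monom c k) = monom (4 * (int k * c)) k + monom (int k * c) (Suc k)"
    using Suc by (simp add: monom_Suc smult_monom)
  ultimately show ?thesis
    unfolding moment_annihilator_def by (simp add: add_monom[symmetric] algebra_simps)
qed

lemma moment_moment_annihilator: "moment (moment_annihilator q) = 0"
proof -
  have "moment (moment_annihilator q) = (\<Sum>i\<le>degree q. moment (moment_annihilator (monom (coeff q i) i)))"
    by (subst poly_as_sum_of_monoms[symmetric, of q]) (simp add: moment_annihilator_sum moment_sum)
  also have "\<dots> = (\<Sum>i\<le>degree q. coeff q i * (int (Suc i) * alt_cbinom (Suc i) + (4 * int i + 2) * alt_cbinom i))"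
    by (simp add: moment_annihilator_monom moment_add moment_monom algebra_simps)
  also have "\<dots> = 0"
    by (simp only: alt_cbinom_Suc) (simp add: algebra_simps)
  finally show ?thesis .
qed

section \<open>The generating polynomial\<close>

definition diag_sum :: "(nat \<Rightarrow> int) \<Rightarrow> nat \<Rightarrow> int" where
  "diag_sum f m = (\<Sum>k\<le>m. int ((m choose k) * (k choose (m - k))) * f k)"

lemma S_eq_diag_sum: "S (m + 3) = diag_sum alt_cbinom m"
  unfolding S_def diag_sum_def alt_cbinom_def
  by (rule sum.cong) (auto simp: lessThan_Suc_atMost algebra_simps)

text \<open>Bivariate polynomials are \<open>int poly poly\<close>: the outer variable is \<open>x\<close> and the
  coefficients are polynomials in \<open>w\<close>.\<close>

definition wvar :: "int poly poly" where "wvar = [:monom 1 1:]"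
definition xvar :: "int poly poly" where "xvar = [:0, 1:]"
definition genpoly :: "int poly poly" where "genpoly = 1 + wvar * xvar + wvar * xvar^2"

lemma coeff_one_plus_x_pow: "coeff ([:1, 1:]^k) i = (of_nat (k choose i) :: 'a::comm_ring_1)"
proof (cases "i \<le> k")
  case True
  then show ?thesis by (simp add: coeff_linear_poly_power)
next
  case False
  then show ?thesis
    by (simp add: coeff_eq_0 degree_linear_power binomial_eq_0 not_le)
qed

lemma coeff_genpoly_pow_diag:
  "coeff (genpoly^m) m = (\<Sum>k\<le>m. monom (int ((m choose k) * (k choose (m - k)))) k)"
proof -
  have wx_pow: "(wvar * (xvar * [:1, 1:]))^k = smult (monom 1 k) (monom 1 k * [:1, 1:]^k)" for k
  proof -
    have "wvar * (xvar * [:1, 1:]) = smult (monom 1 1) (xvar * [:1, 1:])"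
      by (simp add: wvar_def)
    then have "(wvar * (xvar * [:1, 1:]))^k = smult (monom 1 1 ^ k) (xvar^k * [:1, 1:]^k)"
      by (simp only: smult_power power_mult_distrib)
    then show ?thesis
      by (simp add: xvar_def monom_altdef)
  qed
  have "genpoly = wvar * (xvar * [:1, 1:]) + 1"
    by (simp add: genpoly_def xvar_def power2_eq_square algebra_simps)
  then have "genpoly^m = (\<Sum>k\<le>m. of_nat (m choose k) * (wvar * (xvar * [:1, 1:]))^k)"
    using binomial_ring[of "wvar * (xvar * [:1, 1:])" 1 m] by simp
  also have "\<dots> = (\<Sum>k\<le>m. smult (of_nat (m choose k) * monom 1 k) (monom 1 k * [:1, 1:]^k))"
    by (simp only: wx_pow) (simp add: of_nat_poly)
  finally have "coeff (genpoly^m) m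
      = (\<Sum>k\<le>m. (of_nat (m choose k) * monom 1 k) * coeff (monom 1 k * [:1, 1:]^k) m)"
    by (simp add: coeff_sum)
  also have "\<dots> = (\<Sum>k\<le>m. monom (int ((m choose k) * (k choose (m - k)))) k)"
  proof (rule sum.cong)
    fix k assume "k \<in> {..m}"
    then have "coeff (monom 1 k * [:1, 1:]^k) m = (of_nat (k choose (m - k)) :: int poly)"
      by (simp add: coeff_monom_mult coeff_one_plus_x_pow)
    then show "(of_nat (m choose k) * monom 1 k) * coeff (monom 1 k * [:1, 1:]^k) m
        = monom (int ((m choose k) * (k choose (m - k)))) k"
      by (simp add: of_nat_poly smult_monom mult_monom)
  qed simp
  finally show ?thesis .
qed

lemma moment_coeff_genpoly_pow_diag: "moment (coeff (genpoly^m) m) = S (m + 3)"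
  unfolding coeff_genpoly_pow_diag moment_sum moment_monom S_eq_diag_sum diag_sum_def ..

section \<open>Divisibility by 4\<close>

lemma two_dvd_central_binomial: "j \<noteq> 0 \<Longrightarrow> 2 dvd ((2*j) choose j)"
proof -
  assume "j \<noteq> 0"
  then obtain i where j: "j = Suc i" by (cases j) auto
  have "(2*j) choose j = ((2*i+1) choose i) + ((2*i+1) choose Suc i)"
    using j by simp
  also have "(2*i+1) choose Suc i = (2*i+1) choose i"
    using binomial_symmetric[of "Suc i" "2*i+1"] by simp
  finally show ?thesis by simp
qed

lemma four_dvd_central_binomial_odd:
  assumes "odd m" "m \<ge> 3"
  shows "4 dvd ((2*m) choose m)"
proof -
  obtain k where m: "m = Suc k" and "k \<noteq> 0"
    using assms by (cases m) auto
  then have "2 dvd ((2*k) choose k)"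
    by (simp add: two_dvd_central_binomial)
  then have "4 dvd m * ((2*m) choose m)"
    unfolding m Suc_times_central_binomial by auto
  moreover have "coprime 4 m"
    using \<open>odd m\<close> by (metis coprime_mult_left_iff mult_2 numeral_Bit0 odd_iff_mod_2_eq_one
      coprime_left_2_iff_odd)
  ultimately show ?thesis
    using coprime_dvd_mult_right_iff by blast
qed

lemma four_dvd_diag_term:
  assumes "odd m" "m \<ge> 3"
  shows "4 dvd ((2*k) choose k) * (m choose k) * (k choose (m - k))"
proof -
  consider "k = m" | "k > m \<or> m - k > k" | "k < m" "m - k \<le> k"
    by linarith
  then show ?thesis
  proof cases
    case 1
    then show ?thesis
      using four_dvd_central_binomial_odd[OF assms] by simp
  next
    case 2
    then show ?thesis
      by (auto simp: binomial_eq_0)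
  next
    case 3
    define j where "j = m - k"
    have "j \<noteq> 0" "k \<noteq> 0" "m - j = k"
      using 3 j_def by auto
    have "m choose j = m choose k"
      using binomial_symmetric[of k m] 3 j_def by simp
    have "(m choose (2*j)) * ((2*j) choose j) = (m choose j) * ((m - j) choose (2*j - j))"
      by (rule choose_mult) (use 3 j_def in auto)
    also have "\<dots> = (m choose k) * (k choose (m - k))"
      using \<open>m - j = k\<close> \<open>m choose j = m choose k\<close> j_def[symmetric] by (simp add: mult_2)
    finally have split: "(m choose k) * (k choose (m - k)) = (m choose (2*j)) * ((2*j) choose j)" ..
    have "2 * 2 dvd ((2*k) choose k) * ((2*j) choose j)"
      using two_dvd_central_binomial \<open>j \<noteq> 0\<close> \<open>k \<noteq> 0\<close> by (intro mult_dvd_mono)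
    then show ?thesis
      unfolding mult.assoc split by (simp add: dvd_mult2 mult.left_commute)
  qed
qed

lemma four_dvd_S: "4 dvd S (4*n + 2)"
proof (cases n)
  case 0
  then show ?thesis by (simp add: S_def)
next
  case (Suc i)
  define m where "m = 4*n - 1"
  have "odd m" "m \<ge> 3" "4*n + 2 = m + 3"
    using Suc m_def by auto
  have "(4::int) dvd diag_sum alt_cbinom m"
    unfolding diag_sum_def alt_cbinom_def
  proof (rule dvd_sum)
    fix k
    have "(4::int) dvd int (((2*k) choose k) * (m choose k) * (k choose (m - k)))"
      using four_dvd_diag_term[OF \<open>odd m\<close> \<open>m \<ge> 3\<close>] by (metis int_dvd_int_iff of_nat_numeral)
    then have "(4::int) dvd (-1)^k * int (((2*k) choose k) * (m choose k) * (k choose (m - k)))"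
      by (rule dvd_mult)
    then show "(4::int) dvd int ((m choose k) * (k choose (m - k))) * ((-1)^k * int ((2*k) choose k))"
      by (simp add: algebra_simps)
  qed
  then show ?thesis
    unfolding \<open>4*n + 2 = m + 3\<close> S_eq_diag_sum .
qed

section \<open>Congruences modulo 3\<close>

definition unit3_prod :: "nat \<Rightarrow> nat" where
  "unit3_prod k = (\<Prod>i<k. (3*i + 1) * (3*i + 2))"

lemma fact_triple: "fact (3*k) = 3^k * fact k * unit3_prod k"
proof (induction k)
  case (Suc k)
  have "fact (3 * Suc k) = fact (3*k) * (3*k + 1) * (3*k + 2) * (3*k + 3)"
    by (simp add: fact_Suc algebra_simps numeral_3_eq_3)
  then show ?case
    using Suc by (simp add: unit3_prod_def fact_Suc algebra_simps)
qed (simp add: unit3_prod_def)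

lemma four_pow_cong_one: "[(4::nat)^k = 1] (mod 3)"
proof -
  have "[(4::nat) = 1] (mod 3)"
    by (simp add: cong_def)
  from cong_pow[OF this, of k] show ?thesis
    by simp
qed

lemma unit3_prod_cong: "[unit3_prod k = 2^k] (mod 3)"
proof -
  have "[unit3_prod k = (\<Prod>i<k. 2)] (mod 3)"
    unfolding unit3_prod_def
  proof (rule cong_prod)
    fix i :: nat
    have "[3 * (3*i*i + 3*i) + 2 = 0 + 2] (mod 3)"
      by (intro cong_add) (simp_all add: cong_0_iff)
    moreover have "(3*i + 1) * (3*i + 2) = 3 * (3*i*i + 3*i) + 2"
      by (simp add: algebra_simps)
    ultimately show "[(3*i + 1) * (3*i + 2) = 2] (mod 3)"
      by (metis add_0)
  qed
  then show ?thesis by simp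
qed

lemma central_binomial_triple_cong: "[(6*k) choose (3*k) = (2*k) choose k] (mod 3)"
proof -
  let ?R = unit3_prod
  have "(3^(2*k) * fact k * fact k) * (((6*k) choose (3*k)) * ?R k ^ 2)
      = fact (3*k) * fact (3*k) * ((6*k) choose (3*k))"
    unfolding fact_triple by (simp add: power_mult power2_eq_square algebra_simps)
  also have "\<dots> = fact (6*k)"
    using binomial_fact_lemma[of "3*k" "6*k"] by simp
  also have "\<dots> = 3^(2*k) * (fact k * fact k * ((2*k) choose k)) * ?R (2*k)"
    using fact_triple[of "2*k"] binomial_fact_lemma[of k "2*k"] by simp
  finally have eq: "((6*k) choose (3*k)) * ?R k ^ 2 = ((2*k) choose k) * ?R (2*k)"
    by (simp add: algebra_simps)
  have two_pow: "(2::nat)^(2*k) = 4^k" "((2::nat)^k)^2 = 4^k"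
    by (simp_all add: power_mult power_mult_distrib[symmetric] power2_eq_square)
  have "[?R k ^ 2 = 1] (mod 3)"
    using cong_pow[OF unit3_prod_cong[of k], of 2] four_pow_cong_one[of k]
    unfolding two_pow by (rule cong_trans)
  moreover have "[?R (2*k) = 1] (mod 3)"
    using unit3_prod_cong[of "2*k"] four_pow_cong_one[of k]
    unfolding two_pow by (rule cong_trans)
  ultimately show ?thesis
    using eq by (metis cong_scalar_left cong_sym cong_trans mult_1_right)
qed

lemma alt_cbinom_triple_cong: "[alt_cbinom (3*k) = alt_cbinom k] (mod 3)"
proof -
  have "[int ((2*(3*k)) choose (3*k)) = int ((2*k) choose k)] (mod 3)"
    using central_binomial_triple_cong[of k] cong_int_iff[where n = 3] by (simp add: mult.assoc)
  then show ?thesis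
    unfolding alt_cbinom_def by (simp add: power_mult cong_scalar_left)
qed

lemma alt_cbinom_triple_Suc_cong: "[alt_cbinom (3*k + 1) = alt_cbinom (3*k)] (mod 3)"
proof -
  have "alt_cbinom (3*k + 1) - alt_cbinom (3*k)
      = 3 * (- (4 * int k + 1) * alt_cbinom (3*k) - int k * alt_cbinom (3*k + 1))"
    using alt_cbinom_Suc[of "3*k"] by (simp add: algebra_simps)
  then show ?thesis
    by (simp add: cong_iff_dvd_diff)
qed

lemma alt_cbinom_triple_Suc2_cong: "[alt_cbinom (3*k + 2) = 0] (mod 3)"
proof -
  have "alt_cbinom (3*k + 2)
      = 3 * (alt_cbinom (3*k + 2) + (4 * int k + 2) * alt_cbinom (3*k + 1) + int k * alt_cbinom (3*k + 2))"
    using alt_cbinom_Suc[of "Suc (3*k)"] by (simp add: algebra_simps)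
  then show ?thesis
    by (metis cong_0_iff dvd_triv_left)
qed

definition bimonom :: "int \<Rightarrow> nat \<Rightarrow> nat \<Rightarrow> int poly poly" where
  "bimonom c u v = monom (monom c u) v"

lemma bimonom_mult: "bimonom c u v * bimonom d u' v' = bimonom (c * d) (u + u') (v + v')"
  by (simp add: bimonom_def mult_monom)

lemma one_eq_bimonom: "1 = bimonom 1 0 0"
  by (simp add: bimonom_def monom_0 one_pCons)

lemma of_nat_eq_bimonom: "of_nat n = bimonom (int n) 0 0"
  by (simp add: bimonom_def of_nat_poly monom_0)

lemma wvar_eq_bimonom: "wvar = bimonom 1 1 0"
  by (simp add: bimonom_def wvar_def monom_0)

lemma xvar_eq_bimonom: "xvar = bimonom 1 0 1"
  by (simp add: bimonom_def xvar_def monom_0 monom_Suc one_pCons)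

lemma bimonom_pow: "(bimonom c u v)^k = bimonom (c^k) (u * k) (v * k)"
  by (induction k) (simp_all add: one_eq_bimonom bimonom_mult algebra_simps)

lemma moment_coeff_bimonom: "moment (coeff (bimonom c u v) j) = (if j = v then c * alt_cbinom u else 0)"
  by (simp add: bimonom_def coeff_monom moment_monom moment_def[of 0])

lemma genpoly_eq_bimonom: "genpoly = bimonom 1 0 0 + bimonom 1 1 1 + bimonom 1 1 2"
  by (simp add: genpoly_def wvar_eq_bimonom xvar_eq_bimonom one_eq_bimonom bimonom_mult
      bimonom_pow numeral_2_eq_2)

lemma numeral_eq_bimonom: "numeral n = bimonom (numeral n) 0 0"
  using of_nat_eq_bimonom[of "numeral n"] by simp

lemma genpoly_square_eq_bimonom:
  "genpoly^2 = bimonom 1 0 0 + bimonom 2 1 1 + bimonom 2 1 2 + bimonom 1 2 2 + bimonom 2 2 3 + bimonom 1 2 4"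
  by (simp add: genpoly_eq_bimonom power2_eq_square bimonom_mult algebra_simps numeral_eq_bimonom
      eval_nat_numeral)

definition genpoly3 :: "int poly poly" where
  "genpoly3 = 1 + wvar^3 * xvar^3 + wvar^3 * xvar^6"

lemma three_dvd_genpoly_pow_diff: "3 dvd genpoly^(3*q + r) - genpoly3^q * genpoly^r"
proof -
  have "3 dvd genpoly^3 - genpoly3"
  proof
    show "genpoly^3 - genpoly3
      = 3 * (wvar * (xvar + xvar^2) + wvar^2 * (xvar + xvar^2)^2 + wvar^3 * (xvar^4 + xvar^5))"
      unfolding genpoly_def genpoly3_def
      by (simp add: algebra_simps power2_eq_square power3_eq_cube numeral_eq_Suc)
  qed
  moreover have "genpoly^3 - genpoly3 dvd (genpoly^3)^q - genpoly3^q"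
    by (rule dvdI, rule power_diff_sumr2)
  ultimately have "3 dvd (genpoly^3)^q - genpoly3^q"
    by (rule dvd_trans)
  then have "3 dvd ((genpoly^3)^q - genpoly3^q) * genpoly^r"
    by (rule dvd_mult2)
  moreover have "((genpoly^3)^q - genpoly3^q) * genpoly^r = genpoly^(3*q + r) - genpoly3^q * genpoly^r"
    by (simp only: power_add power_mult left_diff_distrib)
  ultimately show ?thesis
    by simp
qed

lemma moment_coeff_genpoly_pow_cong:
  "[moment (coeff (genpoly^(3*q + r)) j) = moment (coeff (genpoly3^q * genpoly^r) j)] (mod 3)"
proof -
  obtain G where "genpoly^(3*q + r) - genpoly3^q * genpoly^r = 3 * G"
    using three_dvd_genpoly_pow_diff by (rule dvdE)
  then have split: "genpoly^(3*q + r) = 3 * G + genpoly3^q * genpoly^r"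
    by (simp only: diff_eq_eq)
  have "moment (coeff (3 * G) j) = 3 * moment (coeff G j)"
    by (simp add: numeral_poly moment_smult)
  then have "moment (coeff (genpoly^(3*q + r)) j)
      = 3 * moment (coeff G j) + moment (coeff (genpoly3^q * genpoly^r) j)"
    unfolding split coeff_add moment_add by simp
  then show ?thesis
    by (simp add: cong_iff_dvd_diff)
qed

lemma genpoly3_pow:
  "genpoly3^q = (\<Sum>k\<le>q. \<Sum>i\<le>k. bimonom (int ((q choose k) * (k choose i))) (3*k) (3*k + 3*i))"
proof -
  have "genpoly3 = wvar^3 * xvar^3 * (xvar^3 + 1) + 1"
    by (simp add: genpoly3_def algebra_simps power_add[symmetric])
  then have "genpoly3^q = (\<Sum>k\<le>q. of_nat (q choose k) * (wvar^3 * xvar^3 * (xvar^3 + 1))^k)"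
    using binomial_ring[of "wvar^3 * xvar^3 * (xvar^3 + 1)" 1 q] by simp
  also have "\<dots> = (\<Sum>k\<le>q. \<Sum>i\<le>k. bimonom (int ((q choose k) * (k choose i))) (3*k) (3*k + 3*i))"
  proof (rule sum.cong[OF refl])
    fix k
    have "(xvar^3 + 1)^k = (\<Sum>i\<le>k. of_nat (k choose i) * (xvar^3)^i)"
      using binomial_ring[of "xvar^3" 1 k] by simp
    then show "of_nat (q choose k) * (wvar^3 * xvar^3 * (xvar^3 + 1))^k
        = (\<Sum>i\<le>k. bimonom (int ((q choose k) * (k choose i))) (3*k) (3*k + 3*i))"
      unfolding power_mult_distrib
      by (simp add: sum_distrib_left wvar_eq_bimonom xvar_eq_bimonom of_nat_eq_bimonom
          bimonom_pow bimonom_mult algebra_simps)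
  qed
  finally show ?thesis .
qed

lemma moment_coeff_genpoly3_pow_bimonom:
  "moment (coeff (genpoly3^q * bimonom d u v) j) =
    (\<Sum>k\<le>q. \<Sum>i\<le>k. if 3*k + 3*i + v = j
      then int ((q choose k) * (k choose i)) * d * alt_cbinom (3*k + u) else 0)"
  unfolding genpoly3_pow sum_distrib_right bimonom_mult coeff_sum moment_sum moment_coeff_bimonom
  by (intro sum.cong refl) (auto simp: algebra_simps)

lemma moment_coeff_genpoly3_pow_bimonom_diag:
  "moment (coeff (genpoly3^q * bimonom d u v) (3*q + v)) = d * diag_sum (\<lambda>k. alt_cbinom (3*k + u)) q"
  unfolding moment_coeff_genpoly3_pow_bimonom diag_sum_def sum_distrib_left
proof (rule sum.cong[OF refl])
  fix k assume "k \<in> {..q}"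
  then have "(\<Sum>i\<le>k. if 3*k + 3*i + v = 3*q + v
        then int ((q choose k) * (k choose i)) * d * alt_cbinom (3*k + u) else 0)
      = (\<Sum>i\<le>k. if i = q - k
        then int ((q choose k) * (k choose i)) * d * alt_cbinom (3*k + u) else 0)"
    by (intro sum.cong) auto
  then show "(\<Sum>i\<le>k. if 3*k + 3*i + v = 3*q + v
        then int ((q choose k) * (k choose i)) * d * alt_cbinom (3*k + u) else 0)
      = d * (int ((q choose k) * (k choose (q - k))) * alt_cbinom (3*k + u))"
    by (simp add: binomial_eq_0)
qed

lemma moment_coeff_genpoly3_pow_bimonom_off:
  "v mod 3 \<noteq> w mod 3 \<Longrightarrow> moment (coeff (genpoly3^q * bimonom d u v) (3*q + w)) = 0"
  unfolding moment_coeff_genpoly3_pow_bimonom by (intro sum.neutral ballI) presburger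

lemma S_cong_genpoly3:
  "[S (3*q + r + 3) = moment (coeff (genpoly3^q * genpoly^r) (3*q + r))] (mod 3)"
  using moment_coeff_genpoly_pow_cong[of q r "3*q + r"]
  by (simp add: moment_coeff_genpoly_pow_diag)

lemma diag_sum_cong: "(\<And>k. [f k = g k] (mod n)) \<Longrightarrow> [diag_sum f q = diag_sum g q] (mod n)"
  unfolding diag_sum_def by (intro cong_sum cong_scalar_left)

lemma S_triple_cong: "[S (3*q + 3) = S (q + 3)] (mod 3)"
proof -
  have "[S (3*q + 3) = moment (coeff (genpoly3^q * bimonom 1 0 0) (3*q + 0))] (mod 3)"
    using S_cong_genpoly3[of q 0] by (simp add: one_eq_bimonom[symmetric])
  also have "moment (coeff (genpoly3^q * bimonom 1 0 0) (3*q + 0)) = diag_sum (\<lambda>k. alt_cbinom (3*k)) q"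
    by (simp only: moment_coeff_genpoly3_pow_bimonom_diag) simp
  also have "[diag_sum (\<lambda>k. alt_cbinom (3*k)) q = diag_sum alt_cbinom q] (mod 3)"
    by (intro diag_sum_cong alt_cbinom_triple_cong)
  finally show ?thesis
    by (simp add: S_eq_diag_sum)
qed

lemma S_triple_Suc_cong: "[S (3*q + 4) = S (q + 3)] (mod 3)"
proof -
  let ?M = "\<lambda>u v. moment (coeff (genpoly3^q * bimonom 1 u v) (3*q + 1))"
  have "[S (3*q + 4) = ?M 0 0 + ?M 1 1 + ?M 1 2] (mod 3)"
    using S_cong_genpoly3[of q 1]
    unfolding power_one_right genpoly_eq_bimonom distrib_left coeff_add moment_add
    by (simp add: add.commute)
  also have "?M 0 0 + ?M 1 1 + ?M 1 2 = diag_sum (\<lambda>k. alt_cbinom (3*k + 1)) q"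
    using moment_coeff_genpoly3_pow_bimonom_diag[of q 1 1 1]
      moment_coeff_genpoly3_pow_bimonom_off[of 0 1 q 1 0]
      moment_coeff_genpoly3_pow_bimonom_off[of 2 1 q 1 1]
    by simp
  also have "[diag_sum (\<lambda>k. alt_cbinom (3*k + 1)) q = diag_sum alt_cbinom q] (mod 3)"
    by (intro diag_sum_cong cong_trans[OF alt_cbinom_triple_Suc_cong alt_cbinom_triple_cong])
  finally show ?thesis
    by (simp add: S_eq_diag_sum)
qed

lemma S_triple_Suc2_cong: "[S (3*q + 5) = 2 * S (q + 3)] (mod 3)"
proof -
  let ?M = "\<lambda>d u v. moment (coeff (genpoly3^q * bimonom d u v) (3*q + 2))"
  have "[S (3*q + 5) = ?M 1 0 0 + ?M 2 1 1 + ?M 2 1 2 + ?M 1 2 2 + ?M 2 2 3 + ?M 1 2 4] (mod 3)"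
    using S_cong_genpoly3[of q 2]
    unfolding genpoly_square_eq_bimonom distrib_left coeff_add moment_add
    by (simp add: add.commute)
  also have "?M 1 0 0 + ?M 2 1 1 + ?M 2 1 2 + ?M 1 2 2 + ?M 2 2 3 + ?M 1 2 4
      = 2 * diag_sum (\<lambda>k. alt_cbinom (3*k + 1)) q + diag_sum (\<lambda>k. alt_cbinom (3*k + 2)) q"
    using moment_coeff_genpoly3_pow_bimonom_diag[of q 2 1 2]
      moment_coeff_genpoly3_pow_bimonom_diag[of q 1 2 2]
      moment_coeff_genpoly3_pow_bimonom_off[of 0 2 q 1 0]
      moment_coeff_genpoly3_pow_bimonom_off[of 1 2 q 2 1]
      moment_coeff_genpoly3_pow_bimonom_off[of 3 2 q 2 2]
      moment_coeff_genpoly3_pow_bimonom_off[of 4 2 q 1 2]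
    by simp
  also have "[2 * diag_sum (\<lambda>k. alt_cbinom (3*k + 1)) q + diag_sum (\<lambda>k. alt_cbinom (3*k + 2)) q
      = 2 * diag_sum alt_cbinom q + diag_sum (\<lambda>_. 0) q] (mod 3)"
    by (intro cong_add cong_scalar_left diag_sum_cong alt_cbinom_triple_Suc2_cong
        cong_trans[OF alt_cbinom_triple_Suc_cong alt_cbinom_triple_cong])
  finally show ?thesis
    by (simp add: S_eq_diag_sum diag_sum_def)
qed

lemma S_cong_mod3: "[S (3*n) = S (3*n + 1)] (mod 3) \<and> [S (3*n + 1) = - S (3*n + 2)] (mod 3)"
proof (cases n)
  case 0
  then show ?thesis by (simp add: S_def)
next
  case (Suc q)
  have "3*n = 3*q + 3" "3*n + 1 = 3*q + 4" "3*n + 2 = 3*q + 5"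
    using Suc by simp_all
  moreover have "[- (2 * S (q + 3)) = S (q + 3)] (mod 3)"
    by (simp add: cong_iff_dvd_diff)
  ultimately show ?thesis
    using S_triple_cong[of q] S_triple_Suc_cong[of q] S_triple_Suc2_cong[of q]
    by (metis cong_minus_minus_iff cong_sym cong_trans)
qed

section \<open>The recurrence modulo \<open>n\<close>\<close>

definition pderiv_w :: "'a::idom poly poly \<Rightarrow> 'a poly poly" where
  "pderiv_w p = map_poly pderiv p"

lemma coeff_pderiv_w: "coeff (pderiv_w p) n = pderiv (coeff p n)"
  by (simp add: pderiv_w_def coeff_map_poly)

lemma pderiv_w_add: "pderiv_w (p + q) = pderiv_w p + pderiv_w q"
  by (rule poly_eqI) (simp add: coeff_pderiv_w pderiv_add)

lemma pderiv_w_minus: "pderiv_w (- p) = - pderiv_w p"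
  by (rule poly_eqI) (simp add: coeff_pderiv_w pderiv_minus)

lemma pderiv_w_mult: "pderiv_w (p * q) = pderiv_w p * q + p * pderiv_w q"
proof (rule poly_eqI)
  fix n
  have pderiv_sum: "pderiv (sum f A) = (\<Sum>x\<in>A. pderiv (f x))" for f :: "nat \<Rightarrow> 'a poly" and A
    using higher_pderiv_sum[of 1 f A] by simp
  have "coeff (pderiv_w (p * q)) n
      = (\<Sum>i\<le>n. pderiv (coeff p i) * coeff q (n - i)) + (\<Sum>i\<le>n. coeff p i * pderiv (coeff q (n - i)))"
    by (simp add: coeff_pderiv_w coeff_mult pderiv_sum pderiv_mult sum.distrib algebra_simps)
  also have "\<dots> = coeff (pderiv_w p * q + p * pderiv_w q) n"
    by (simp only: coeff_add coeff_mult coeff_pderiv_w)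
  finally show "coeff (pderiv_w (p * q)) n = coeff (pderiv_w p * q + p * pderiv_w q) n" .
qed

lemma pderiv_w_const: "pderiv_w [:c:] = [:pderiv c:]"
  by (rule poly_eqI) (simp add: coeff_pderiv_w coeff_pCons split: nat.split)

lemma pderiv_w_1: "pderiv_w 1 = 0"
  by (simp add: one_pCons pderiv_w_const)

lemma pderiv_w_wvar: "pderiv_w wvar = 1"
  by (simp add: wvar_def pderiv_w_const pderiv_monom one_pCons)

lemma pderiv_w_xvar: "pderiv_w xvar = 0"
  by (rule poly_eqI) (simp add: xvar_def coeff_pderiv_w coeff_pCons split: nat.split)

lemma pderiv_w_power_Suc: "pderiv_w (p^Suc k) = of_nat (Suc k) * p^k * pderiv_w p"
  by (induction k) (simp_all add: pderiv_w_mult algebra_simps)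

lemma pderiv_power_Suc_of_nat: "pderiv (p^Suc k) = of_nat (Suc k) * p^k * pderiv p"
  unfolding pderiv_power_Suc by (simp add: of_nat_poly)

lemma pderiv_xvar: "pderiv xvar = 1"
  by (simp add: xvar_def pderiv_pCons)

lemma pderiv_wvar: "pderiv wvar = 0"
  by (simp add: wvar_def pderiv_pCons)

lemma pderiv_genpoly: "pderiv genpoly = wvar + 2*wvar*xvar"
  by (simp add: genpoly_def pderiv_add pderiv_mult pderiv_xvar pderiv_wvar power2_eq_square
      algebra_simps)

lemma pderiv_w_genpoly: "pderiv_w genpoly = xvar + xvar^2"
  by (simp add: genpoly_def pderiv_w_add pderiv_w_mult pderiv_w_wvar pderiv_w_xvar pderiv_w_1
      power2_eq_square algebra_simps)

lemma map_poly_moment_annihilator: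
  "map_poly moment_annihilator F = (wvar + 2) * F + wvar * (wvar + 4) * pderiv_w F"
proof -
  have "wvar + 2 = [:[:2, 1:]:]" "wvar * (wvar + 4) = [:[:0, 4, 1:]:]"
    by (simp_all add: wvar_def numeral_poly monom_Suc monom_0)
  then show ?thesis
    by (intro poly_eqI) (simp add: coeff_map_poly coeff_pderiv_w moment_annihilator_def)
qed

lemma moment_coeff_map_poly_moment_annihilator:
  "moment (coeff (map_poly moment_annihilator F) n) = 0"
proof -
  have "moment_annihilator 0 = 0"
    by (simp add: moment_annihilator_def)
  then show ?thesis
    by (simp add: coeff_map_poly moment_moment_annihilator)
qed

text \<open>With P = G, Z = G^m and M = m, the three groups on the right are x d/dx A,
  (w+2) F + w(w+4) d/dw F and (m+3) R for the certificate A = b1 G^(m+2) + b2 G^(m+1),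
  F = (x + x^2)((1+x) G^(m+1) (G+1) - G^(m+2)).\<close>

lemma recurrence_certificate_identity:
  fixes W X Z M :: "'a::comm_ring_1"
  defines "P \<equiv> 1 + W*X + W*X^2" and "P' \<equiv> W + 2*W*X" and "U \<equiv> X + X^2"
    and "b1 \<equiv> 2*X^3 + 6*X^2 + 3*X - 1" and "b2 \<equiv> 2*X^3 - 3*X^2 - 4*X + 1"
  shows "X*Z*P^2 + 12*X^2*Z*P + 16*X^3*Z
    = X * ((6*X^2 + 12*X + 3)*Z*P^2 + b1*(M+2)*Z*P*P' + (6*X^2 - 6*X - 4)*Z*P + b2*(M+1)*Z*P')
      + ((W+2) * (U*((1+X)*(Z*P)*(P+1) - Z*P^2))
         + W*(W+4) * (U*((1+X)*((M+1)*Z*U*(P+1) + Z*P*U) - (M+2)*Z*P*U)))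
      - (M+3) * (X*P'*(b1*Z*P + b2*Z) + (W+4)*U*((1+X)*(Z*P^2 - Z) - (Z*P^2 - Z*P)))"
  unfolding assms by (simp add: algebra_simps power2_eq_square power3_eq_cube)

lemma genpoly_recurrence_certificate:
  obtains A R F where
    "xvar * genpoly^(m+2) + 12 * xvar^2 * genpoly^(m+1) + 16 * xvar^3 * genpoly^m
      = xvar * pderiv A + map_poly moment_annihilator F + of_nat (m + 3) * R"
proof -
  define Z where "Z = genpoly^m"
  define M :: "int poly poly" where "M = of_nat m"
  define P' where "P' = wvar + 2*wvar*xvar"
  define U where "U = xvar + xvar^2"
  define b1 :: "int poly poly" where "b1 = 2*xvar^3 + 6*xvar^2 + 3*xvar - 1"
  define b2 :: "int poly poly" where "b2 = 2*xvar^3 - 3*xvar^2 - 4*xvar + 1"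
  define A where "A = b1 * genpoly^(m+2) + b2 * genpoly^(m+1)"
  define F where "F = U * ((1 + xvar) * genpoly^(m+1) * (genpoly + 1) - genpoly^(m+2))"
  have pow: "genpoly^(m+1) = Z * genpoly" "genpoly^(m+2) = Z * genpoly^2"
    by (simp_all add: Z_def power_add power2_eq_square)
  have pderiv_pow: "pderiv (genpoly^(m+1)) = (M+1)*Z*P'" "pderiv (genpoly^(m+2)) = (M+2)*Z*genpoly*P'"
    using pderiv_power_Suc_of_nat[of genpoly m] pderiv_power_Suc_of_nat[of genpoly "m+1"]
    by (simp_all add: Z_def M_def P'_def pderiv_genpoly algebra_simps)
  have pderiv_b: "pderiv b1 = 6*xvar^2 + 12*xvar + 3" "pderiv b2 = 6*xvar^2 - 6*xvar - 4"
    by (simp_all add: b1_def b2_def pderiv_add pderiv_diff pderiv_mult pderiv_xvar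
        power2_eq_square power3_eq_cube algebra_simps)
  have pderiv_A: "pderiv A = (6*xvar^2 + 12*xvar + 3)*Z*genpoly^2 + b1*(M+2)*Z*genpoly*P'
      + (6*xvar^2 - 6*xvar - 4)*Z*genpoly + b2*(M+1)*Z*P'"
    unfolding A_def pderiv_add pderiv_mult pderiv_pow pderiv_b
    by (simp add: pow Z_def[symmetric] power2_eq_square algebra_simps)
  have pderiv_w_pow: "pderiv_w (genpoly^(m+1)) = (M+1)*Z*U" "pderiv_w (genpoly^(m+2)) = (M+2)*Z*genpoly*U"
    using pderiv_w_power_Suc[of genpoly m] pderiv_w_power_Suc[of genpoly "m+1"]
    by (simp_all add: Z_def M_def U_def pderiv_w_genpoly algebra_simps)
  have pderiv_w_U: "pderiv_w U = 0" "pderiv_w (1 + xvar) = 0"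
    by (simp_all add: U_def pderiv_w_add pderiv_w_mult pderiv_w_xvar pderiv_w_1 power2_eq_square)
  have pderiv_w_F: "pderiv_w F = U*((1+xvar)*((M+1)*Z*U*(genpoly+1) + Z*genpoly*U) - (M+2)*Z*genpoly*U)"
    unfolding F_def diff_conv_add_uminus pderiv_w_add pderiv_w_minus pderiv_w_mult pderiv_w_pow
      pderiv_w_U pderiv_w_genpoly[folded U_def] pderiv_w_xvar pderiv_w_1
    by (simp add: pow Z_def[symmetric] power2_eq_square algebra_simps)
  define R where "R = xvar*P'*(b1*Z*genpoly + b2*Z)
    + (wvar+4)*U*((1+xvar)*(Z*genpoly^2 - Z) - (Z*genpoly^2 - Z*genpoly))"
  have "xvar*Z*genpoly^2 + 12*xvar^2*Z*genpoly + 16*xvar^3*Z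
      = xvar * pderiv A + ((wvar+2)*F + wvar*(wvar+4)*pderiv_w F) - (M+3) * R"
    unfolding pderiv_A pderiv_w_F unfolding F_def pow R_def
    by (rule recurrence_certificate_identity[of xvar Z wvar M,
          folded genpoly_def P'_def U_def b1_def b2_def])
  moreover have "xvar * genpoly^(m+2) + 12 * xvar^2 * genpoly^(m+1) + 16 * xvar^3 * genpoly^m
      = xvar*Z*genpoly^2 + 12*xvar^2*Z*genpoly + 16*xvar^3*Z"
    unfolding pow by (simp add: Z_def algebra_simps)
  moreover have "M + 3 = of_nat (m + 3)"
    by (simp add: M_def)
  ultimately show ?thesis
    using that[of A F "- R"] by (simp add: map_poly_moment_annihilator)
qed

lemma coeff_xvar_pow_mult: "coeff (xvar^j * p) n = (if n < j then 0 else coeff p (n - j))"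
proof -
  have "xvar^j = monom 1 j"
    by (simp add: xvar_def monom_altdef)
  then show ?thesis
    by (simp add: coeff_monom_mult)
qed

lemma coeff_xvar_mult: "coeff (xvar * p) n = (if n = 0 then 0 else coeff p (n - 1))"
  using coeff_xvar_pow_mult[of 1 p n] by simp

lemma moment_coeff_numeral_mult: "moment (coeff (numeral k * p) n) = numeral k * moment (coeff p n)"
  by (simp add: numeral_poly moment_smult)

lemma moment_coeff_of_nat_mult: "moment (coeff (of_nat k * p) n) = int k * moment (coeff p n)"
  by (simp add: of_nat_poly moment_smult)

lemma S_recurrence_dvd: "int (m + 3) dvd S (m + 5) + 12 * S (m + 4) + 16 * S (m + 3)"
proof -
  obtain A R F where cert:
    "xvar * genpoly^(m+2) + 12 * xvar^2 * genpoly^(m+1) + 16 * xvar^3 * genpoly^m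
      = xvar * pderiv A + map_poly moment_annihilator F + of_nat (m + 3) * R"
    by (rule genpoly_recurrence_certificate)
  have "S (m + 5) + 12 * S (m + 4) + 16 * S (m + 3)
      = moment (coeff (xvar * genpoly^(m+2) + 12 * xvar^2 * genpoly^(m+1) + 16 * xvar^3 * genpoly^m) (m + 3))"
    using moment_coeff_genpoly_pow_diag[of "m + 2"] moment_coeff_genpoly_pow_diag[of "m + 1"]
      moment_coeff_genpoly_pow_diag[of m]
    by (simp add: mult.assoc coeff_xvar_mult coeff_xvar_pow_mult moment_add moment_coeff_numeral_mult
        add.commute)
  also have "\<dots> = int (m + 3) * (moment (coeff A (m + 3)) + moment (coeff R (m + 3)))"
    unfolding cert
    by (simp add: coeff_xvar_mult coeff_pderiv moment_add moment_smult moment_coeff_of_nat_mult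
        moment_coeff_map_poly_moment_annihilator of_nat_poly algebra_simps eval_nat_numeral)
  finally show ?thesis
    by simp
qed

lemma S_recurrence_cong: "n > 0 \<Longrightarrow> [S (n + 2) + 12 * S (n + 1) + 16 * S n = 0] (mod int n)"
proof -
  assume "n > 0"
  then consider "n = 1" | "n = 2" | m where "n = m + 3"
    by (metis One_nat_def Suc_1 add.commute less_Suc_eq not_less_eq le_iff_add numeral_3_eq_3 leI)
  then show ?thesis
  proof cases
    case 1
    then show ?thesis by simp
  next
    case 2
    have "S 4 = -2" "S 3 = 1" "S 2 = 0"
      by (simp_all add: S_def numeral_eq_Suc)
    then show ?thesis
      using 2 by (simp add: cong_0_iff)
  next
    case 3
    then show ?thesis
      using S_recurrence_dvd[of m] by (simp add: cong_0_iff add.commute)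
  qed
qed

theorem lemma4:
  shows "(\<forall>n::nat. [S (3*n) = S (3*n+1)] (mod 3) \<and> [S (3*n+1) = - S (3*n+2)] (mod 3))
    \<and> (\<forall>n::nat. [S (4*n+2) = 0] (mod 4))
    \<and> (\<forall>n::nat. n > 0 \<longrightarrow> [S (n+2) + 12 * S (n+1) + 16 * S n = 0] (mod int n))"
  using S_cong_mod3 four_dvd_S S_recurrence_cong by (simp add: cong_0_iff)

end
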